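(* For every $P$-point ultrafilter $U$ on $\omega$, the space $S_\omega$ is $U$-selective: for every lower semicontinuous $\varphi:Y_U\rightarrow\mathcal{F}(S_\omega)$ there is a continuous $s:Y_U\rightarrow S_\omega$ with $s(y)\in\varphi(y)$ for all $y\in Y_U$.
   Context: $\mathcal{F}(X)$ denotes the set of nonempty closed subsets of a space $X$; a map $\varphi:Y\rightarrow\mathcal{F}(X)$ is lower semicontinuous if for every open $W\subseteq X$ the set $\{y:\varphi(y)\cap W\neq\emptyset\}$ is open in $Y$. For a filter $F$ on $\omega$, $Y_F$ is the space on $\omega\cup\{\infty\}$ with points of $\omega$ isolated and neighborhoods of $\infty$ the sets $A\cup\{\infty\}$, $A\in F$. An ultrafilter $U$ on $\omega$ is a $P$-point if every function $\omega\rightarrow\omega$ is either constant or finite-to-one on some set in $U$. $S_\omega$ is the space on $(\omega\times\omega)\cup\{\infty\}$ in which points of $\omega\times\omega$ are isolated and a set containing $\infty$ is a neighborhood of $\infty$ iff it contains all but finitely many points of each spine $\{m\}\times\omega$; equivalently, a neighborhood base at $\infty$ is given by the sets $W_f=\{\infty\}\cup\{(m,n):n>f(m)\}$ for $f\in{}^\omega\omega$. *)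

theory Defs
  imports "HOL-Analysis.Analysis"
begin

definition is_filter_on_nat :: "nat set set \<Rightarrow> bool" where
  "is_filter_on_nat F \<longleftrightarrow> UNIV \<in> F \<and> {} \<notin> F \<and>
     (\<forall>A B. A \<in> F \<longrightarrow> A \<subseteq> B \<longrightarrow> B \<in> F) \<and>
     (\<forall>A B. A \<in> F \<longrightarrow> B \<in> F \<longrightarrow> A \<inter> B \<in> F)"

definition is_ultrafilter_on_nat :: "nat set set \<Rightarrow> bool" where
  "is_ultrafilter_on_nat U \<longleftrightarrow> is_filter_on_nat U \<and> (\<forall>A. A \<in> U \<or> - A \<in> U)"

definition P_point :: "nat set set \<Rightarrow> bool" where
  "P_point U \<longleftrightarrow> is_ultrafilter_on_nat U \<and>
     (\<forall>f :: nat \<Rightarrow> nat. \<exists>A\<in>U. (\<exists>c. \<forall>n\<in>A. f n = c) \<or> (\<forall>k. finite {n\<in>A. f n = k}))"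

text \<open>The space Y_F on omega plus a point infinity (encoded as None): points Some n are
  isolated, neighbourhoods of None are the sets A \<union> {None} with A \<in> F.\<close>
definition Y_space :: "nat set set \<Rightarrow> nat option topology" where
  "Y_space F = topology (\<lambda>S. None \<in> S \<longrightarrow> {n. Some n \<in> S} \<in> F)"

text \<open>The sequential fan S_omega on omega \<times> omega plus infinity (encoded as None):
  points Some (m,n) isolated; a set containing None is open iff it contains all but
  finitely many points of each spine {m} \<times> omega.\<close>
definition S_omega :: "(nat \<times> nat) option topology" where
  "S_omega = topology (\<lambda>S. None \<in> S \<longrightarrow> (\<forall>m. finite {n. Some (m, n) \<notin> S}))"

definition lsc_closed_valued :: "'a topology \<Rightarrow> 'b topology \<Rightarrow> ('a \<Rightarrow> 'b set) \<Rightarrow> bool" where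
  "lsc_closed_valued Y X \<phi> \<longleftrightarrow>
     (\<forall>y\<in>topspace Y. closedin X (\<phi> y) \<and> \<phi> y \<noteq> {}) \<and>
     (\<forall>W. openin X W \<longrightarrow> openin Y {y \<in> topspace Y. \<phi> y \<inter> W \<noteq> {}})"

lemma istopology_Y_space:
  assumes "is_filter_on_nat F"
  shows "istopology (\<lambda>S. None \<in> S \<longrightarrow> {n. Some n \<in> S} \<in> F)"
proof -
  have up: "\<And>A B. A \<in> F \<Longrightarrow> A \<subseteq> B \<Longrightarrow> B \<in> F" and int: "\<And>A B. A \<in> F \<Longrightarrow> B \<in> F \<Longrightarrow> A \<inter> B \<in> F"
    using assms unfolding is_filter_on_nat_def by blast+
  show ?thesis unfolding istopology_def
  proof (intro conjI allI impI)
    fix S T assume S: "None \<in> S \<longrightarrow> {n. Some n \<in> S} \<in> F" and T: "None \<in> T \<longrightarrow> {n. Some n \<in> T} \<in> F"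
      and "None \<in> S \<inter> T"
    then have "{n. Some n \<in> S} \<inter> {n. Some n \<in> T} \<in> F" using int by blast
    moreover have "{n. Some n \<in> S} \<inter> {n. Some n \<in> T} = {n. Some n \<in> S \<inter> T}" by auto
    ultimately show "{n. Some n \<in> S \<inter> T} \<in> F" by simp
  next
    fix K assume K: "\<forall>S\<in>K. None \<in> S \<longrightarrow> {n. Some n \<in> S} \<in> F" and "None \<in> \<Union>K"
    then obtain S where "S \<in> K" "None \<in> S" by blast
    then have "{n. Some n \<in> S} \<in> F" using K by blast
    then show "{n. Some n \<in> \<Union>K} \<in> F" by (rule up) (use \<open>S \<in> K\<close> in auto)
  qed
qed

lemma istopology_S_omega:
  "istopology (\<lambda>S. None \<in> S \<longrightarrow> (\<forall>m. finite {n. Some (m, n) \<notin> (S::(nat\<times>nat) option set)}))"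
  unfolding istopology_def
proof (intro conjI allI impI)
  fix S T m assume "None \<in> S \<longrightarrow> (\<forall>m. finite {n. Some (m, n) \<notin> (S::(nat\<times>nat) option set)})"
    "None \<in> T \<longrightarrow> (\<forall>m. finite {n. Some (m, n) \<notin> T})" "None \<in> S \<inter> T"
  then have "finite ({n. Some (m, n) \<notin> S} \<union> {n. Some (m, n) \<notin> T})" by auto
  then show "finite {n. Some (m, n) \<notin> S \<inter> T}" by (rule finite_subset[rotated]) auto
next
  fix K :: "(nat\<times>nat) option set set" and m
  assume K: "\<forall>S\<in>K. None \<in> S \<longrightarrow> (\<forall>m. finite {n. Some (m, n) \<notin> S})" "None \<in> \<Union>K"
  then obtain S where "S \<in> K" "None \<in> S" by blast
  then have "finite {n. Some (m, n) \<notin> S}" using K by blast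
  then show "finite {n. Some (m, n) \<notin> \<Union>K}" by (rule finite_subset[rotated]) (use \<open>S \<in> K\<close> in auto)
qed

end

theory Submission
  imports Defs
begin

text \<open>
  If \<open>\<phi>(\<infinity>)\<close> contains an isolated point \<open>q\<close>, lower semicontinuity puts \<open>q\<close> into
  \<open>\<phi>(n)\<close> for \<open>U\<close>-many \<open>n\<close>, and selecting \<open>q\<close> there is continuous; the same works with \<open>\<infinity>\<close>
  if \<open>\<infinity> \<in> \<phi>(n)\<close> for \<open>U\<close>-many \<open>n\<close>. Otherwise, for \<open>U\<close>-many \<open>n\<close> the closed set \<open>\<phi>(n)\<close> misses
  \<open>\<infinity>\<close>, hence meets every spine in a finite set, while lower semicontinuity at \<open>\<infinity>\<close> makes
  \<open>U\<close>-many \<open>\<phi>(n)\<close> meet every fan neighbourhood \<open>W\<^sub>f\<close>. The P-point property then yields a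
  single spine along which the \<open>\<phi>(n)\<close> escape to \<open>\<infinity>\<close> along \<open>U\<close>: if every spine \<open>m\<close> had a
  height \<open>K m\<close> exceeded by only non-\<open>U\<close>-many \<open>\<phi>(n)\<close>, the first spine \<open>a(n)\<close> on which \<open>\<phi>(n)\<close>
  exceeds \<open>K\<close> could be neither constant on a set in \<open>U\<close> nor finite-to-one on one, since in the
  latter case a larger fan neighbourhood would be missed by \<open>U\<close>-many \<open>\<phi>(n)\<close>. Selecting the
  highest point of \<open>\<phi>(n)\<close> on that spine is continuous at \<open>\<infinity>\<close>.
\<close>

lemma is_filter_on_nat_mono: "is_filter_on_nat F \<Longrightarrow> A \<in> F \<Longrightarrow> A \<subseteq> B \<Longrightarrow> B \<in> F"
  unfolding is_filter_on_nat_def by blast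

lemma is_filter_on_nat_Int: "is_filter_on_nat F \<Longrightarrow> A \<in> F \<Longrightarrow> B \<in> F \<Longrightarrow> A \<inter> B \<in> F"
  unfolding is_filter_on_nat_def by blast

lemma is_filter_on_nat_nonempty: "is_filter_on_nat F \<Longrightarrow> A \<in> F \<Longrightarrow> A \<noteq> {}"
  unfolding is_filter_on_nat_def by blast

lemma P_point_imp_filter: "P_point U \<Longrightarrow> is_filter_on_nat U"
  unfolding P_point_def is_ultrafilter_on_nat_def by blast

lemma openin_Y_space:
  "is_filter_on_nat F \<Longrightarrow> openin (Y_space F) S \<longleftrightarrow> (None \<in> S \<longrightarrow> {n. Some n \<in> S} \<in> F)"
  unfolding Y_space_def using istopology_Y_space by simp

lemma topspace_Y_space: "is_filter_on_nat F \<Longrightarrow> topspace (Y_space F) = UNIV"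
  using openin_subset[of "Y_space F" UNIV] by (auto simp: openin_Y_space is_filter_on_nat_def)

lemma continuous_map_Y_space_iff:
  assumes "is_filter_on_nat F"
  shows "continuous_map (Y_space F) X s \<longleftrightarrow>
    range s \<subseteq> topspace X \<and> (\<forall>W. openin X W \<longrightarrow> s None \<in> W \<longrightarrow> {n. s (Some n) \<in> W} \<in> F)"
  unfolding continuous_map_def topspace_Y_space[OF assms] openin_Y_space[OF assms] by auto

lemma lsc_closed_valued_Y_space_at_infinity:
  assumes "is_filter_on_nat F" "lsc_closed_valued (Y_space F) X \<phi>"
    and "openin X W" "\<phi> None \<inter> W \<noteq> {}"
  shows "{n. \<phi> (Some n) \<inter> W \<noteq> {}} \<in> F"
proof -
  have "openin (Y_space F) {y. \<phi> y \<inter> W \<noteq> {}}"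
    using assms(2,3) unfolding lsc_closed_valued_def topspace_Y_space[OF assms(1)] by auto
  with assms(4) show ?thesis by (simp add: openin_Y_space[OF assms(1)])
qed

lemma openin_S_omega:
  "openin S_omega S \<longleftrightarrow> (None \<in> S \<longrightarrow> (\<forall>m. finite {n. Some (m, n) \<notin> S}))"
  unfolding S_omega_def using istopology_S_omega by simp

lemma topspace_S_omega: "topspace S_omega = UNIV"
  using openin_subset[of S_omega UNIV] by (auto simp: openin_S_omega)

lemma closedin_S_omega_finite_spine:
  "closedin S_omega X \<Longrightarrow> None \<notin> X \<Longrightarrow> finite {k. Some (m, k) \<in> X}"
  unfolding closedin_def topspace_S_omega openin_S_omega by (simp add: Compl_eq)

definition fan_nbhd :: "(nat \<Rightarrow> nat) \<Rightarrow> (nat \<times> nat) option set" where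
  "fan_nbhd f = insert None {Some (m, k) | m k. f m < k}"

lemma openin_S_omega_fan_nbhd: "openin S_omega (fan_nbhd f)"
proof -
  have "{k. Some (m, k) \<notin> fan_nbhd f} = {..f m}" for m
    by (auto simp: fan_nbhd_def)
  then show ?thesis by (simp add: openin_S_omega)
qed

lemma fan_nbhd_subset_openin_S_omega:
  assumes "openin S_omega W" "None \<in> W"
  obtains f where "fan_nbhd f \<subseteq> W"
proof -
  have "\<forall>m. \<exists>K. \<forall>k. Some (m, k) \<notin> W \<longrightarrow> k \<le> K"
    using assms unfolding openin_S_omega finite_nat_set_iff_bounded_le by blast
  then obtain f where "\<And>m k. Some (m, k) \<notin> W \<Longrightarrow> k \<le> f m" by metis
  with assms(2) have "fan_nbhd f \<subseteq> W" by (force simp: fan_nbhd_def)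
  then show thesis by (rule that)
qed

lemma fan_bound_of_finite_to_one:
  fixes T :: "nat \<Rightarrow> (nat \<times> nat) set" and a g :: "nat \<Rightarrow> nat"
  assumes finite_fibres: "\<And>j. finite {n\<in>A. a n = j}"
    and finite_spines: "\<And>n m. finite {k. (m, k) \<in> T n}"
    and below: "\<And>n m k. n \<in> A \<Longrightarrow> m < a n \<Longrightarrow> (m, k) \<in> T n \<Longrightarrow> k \<le> g m"
  shows "\<exists>f. \<forall>n\<in>A. \<forall>m k. (m, k) \<in> T n \<longrightarrow> k \<le> f m"
proof -
  define H where "H m = (\<Union>n\<in>{n\<in>A. a n \<le> m}. {k. (m, k) \<in> T n})" for m
  have finite_H: "finite (H m)" for m
  proof -
    have "{n\<in>A. a n \<le> m} = (\<Union>j\<le>m. {n\<in>A. a n = j})" by auto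
    then have "finite {n\<in>A. a n \<le> m}" using finite_fibres by simp
    then show ?thesis unfolding H_def using finite_spines by blast
  qed
  have "k \<le> g m + Max (insert 0 (H m))" if "n \<in> A" "(m, k) \<in> T n" for n m k
  proof (cases "m < a n")
    case True
    with below that show ?thesis by fastforce
  next
    case False
    with that have "k \<in> H m" unfolding H_def by auto
    with finite_H show ?thesis by (meson Max_ge finite_insert insertCI trans_le_add2)
  qed
  then show ?thesis by (intro exI[of _ "\<lambda>m. g m + Max (insert 0 (H m))"]) blast
qed

lemma P_point_escapes_along_spine:
  fixes T :: "nat \<Rightarrow> (nat \<times> nat) set"
  assumes "P_point U"
    and finite_spines: "\<And>n m. finite {k. (m, k) \<in> T n}"
    and escapes: "\<And>f. {n. \<exists>m k. (m, k) \<in> T n \<and> f m < k} \<in> U"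
  shows "\<exists>m. \<forall>K. {n. \<exists>k>K. (m, k) \<in> T n} \<in> U"
proof (rule ccontr)
  have F: "is_filter_on_nat U" using assms(1) by (rule P_point_imp_filter)
  assume "\<not> ?thesis"
  then obtain K where K: "\<And>m. {n. \<exists>k>K m. (m, k) \<in> T n} \<notin> U" by metis
  define B where "B = {n. \<exists>m k. (m, k) \<in> T n \<and> K m < k}"
  have "B \<in> U" unfolding B_def by (rule escapes)
  define a where "a n = (LEAST m. \<exists>k>K m. (m, k) \<in> T n)" for n
  have a_escapes: "\<exists>k>K (a n). (a n, k) \<in> T n" if "n \<in> B" for n
    unfolding a_def by (rule LeastI_ex) (use that in \<open>auto simp: B_def\<close>)
  have below_a: "k \<le> K m" if "m < a n" "(m, k) \<in> T n" for n m k
    using not_less_Least[of m "\<lambda>m. \<exists>k>K m. (m, k) \<in> T n"] that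
    unfolding a_def by (auto simp: not_less)
  obtain A where "A \<in> U" and "(\<exists>c. \<forall>n\<in>A. a n = c) \<or> (\<forall>j. finite {n\<in>A. a n = j})"
    using assms(1) unfolding P_point_def by blast
  then show False
  proof (elim disjE exE)
    fix c assume "\<forall>n\<in>A. a n = c"
    then have "A \<inter> B \<subseteq> {n. \<exists>k>K c. (c, k) \<in> T n}" using a_escapes by auto
    with is_filter_on_nat_Int[OF F \<open>A \<in> U\<close> \<open>B \<in> U\<close>] have "{n. \<exists>k>K c. (c, k) \<in> T n} \<in> U"
      by (rule is_filter_on_nat_mono[OF F])
    with K show False by blast
  next
    assume finite_fibres: "\<forall>j. finite {n\<in>A. a n = j}"
    have "\<exists>f. \<forall>n\<in>A. \<forall>m k. (m, k) \<in> T n \<longrightarrow> k \<le> f m"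
    proof (rule fan_bound_of_finite_to_one)
      show "finite {n\<in>A. a n = j}" for j using finite_fibres by blast
      show "k \<le> K m" if "n \<in> A" "m < a n" "(m, k) \<in> T n" for n m k
        using below_a that(2,3) .
    qed (rule finite_spines)
    then obtain f where f: "\<forall>n\<in>A. \<forall>m k. (m, k) \<in> T n \<longrightarrow> k \<le> f m" by blast
    have "A \<inter> {n. \<exists>m k. (m, k) \<in> T n \<and> f m < k} = {}" using f by (blast dest: leD)
    with is_filter_on_nat_nonempty[OF F is_filter_on_nat_Int[OF F \<open>A \<in> U\<close> escapes]]
    show False by blast
  qed
qed

lemma continuous_selection_through_point:
  assumes F: "is_filter_on_nat F" and lsc: "lsc_closed_valued (Y_space F) X \<phi>"
    and "p \<in> \<phi> None" and persistent: "{n. p \<in> \<phi> (Some n)} \<in> F"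
  shows "\<exists>s. continuous_map (Y_space F) X s \<and> (\<forall>y\<in>topspace (Y_space F). s y \<in> \<phi> y)"
proof -
  have nonempty: "\<phi> y \<noteq> {}" and in_topspace: "\<phi> y \<subseteq> topspace X" for y
    using lsc closedin_subset unfolding lsc_closed_valued_def topspace_Y_space[OF F] by auto
  define s where "s y = (if p \<in> \<phi> y then p else SOME q. q \<in> \<phi> y)" for y
  have selects: "s y \<in> \<phi> y" for y
    using nonempty by (simp add: s_def some_in_eq)
  have "continuous_map (Y_space F) X s"
    unfolding continuous_map_Y_space_iff[OF F]
  proof (intro conjI allI impI)
    show "range s \<subseteq> topspace X" using selects in_topspace by blast
  next
    fix W assume "s None \<in> W"
    then have "{n. p \<in> \<phi> (Some n)} \<subseteq> {n. s (Some n) \<in> W}"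
      using \<open>p \<in> \<phi> None\<close> by (auto simp: s_def)
    with F persistent show "{n. s (Some n) \<in> W} \<in> F" by (rule is_filter_on_nat_mono)
  qed
  with selects show ?thesis by blast
qed

lemma continuous_selection_along_spine:
  assumes F: "is_filter_on_nat F" and nonempty: "\<And>y. \<phi> y \<noteq> {}" and "None \<in> \<phi> None"
    and "D \<in> F" and finite_spine: "\<And>n. n \<in> D \<Longrightarrow> finite {k. Some (m, k) \<in> \<phi> (Some n)}"
    and escapes: "\<And>K. {n. \<exists>k>K. Some (m, k) \<in> \<phi> (Some n)} \<in> F"
  shows "\<exists>s. continuous_map (Y_space F) S_omega s \<and> (\<forall>y\<in>topspace (Y_space F). s y \<in> \<phi> y)"
proof -
  define top where "top n = Max {k. Some (m, k) \<in> \<phi> (Some n)}" for n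
  define s where "s y = (case y of
      None \<Rightarrow> None
    | Some n \<Rightarrow> if n \<in> D \<and> (\<exists>k. Some (m, k) \<in> \<phi> y) then Some (m, top n) else SOME q. q \<in> \<phi> y)"
    for y
  have top: "Some (m, top n) \<in> \<phi> (Some n) \<and> k \<le> top n"
    if "n \<in> D" "Some (m, k) \<in> \<phi> (Some n)" for n k
    using finite_spine[OF that(1)] that(2) Max_in[of "{k. Some (m, k) \<in> \<phi> (Some n)}"]
    unfolding top_def by auto
  have "s y \<in> \<phi> y" for y
    using \<open>None \<in> \<phi> None\<close> top nonempty by (auto simp: s_def some_in_eq split: option.split)
  moreover have "continuous_map (Y_space F) S_omega s"
    unfolding continuous_map_Y_space_iff[OF F] topspace_S_omega
  proof (intro conjI allI impI subset_UNIV)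
    fix W assume "openin S_omega W" "s None \<in> W"
    then obtain f where f: "fan_nbhd f \<subseteq> W"
      using fan_nbhd_subset_openin_S_omega by (auto simp: s_def)
    have "D \<inter> {n. \<exists>k>f m. Some (m, k) \<in> \<phi> (Some n)} \<subseteq> {n. s (Some n) \<in> W}"
    proof safe
      fix n k assume "n \<in> D" "f m < k" "Some (m, k) \<in> \<phi> (Some n)"
      with top have "Some (m, top n) \<in> fan_nbhd f" "s (Some n) = Some (m, top n)"
        by (fastforce simp: fan_nbhd_def s_def)+
      with f show "s (Some n) \<in> W" by auto
    qed
    with F \<open>D \<in> F\<close> escapes show "{n. s (Some n) \<in> W} \<in> F"
      by (meson is_filter_on_nat_Int is_filter_on_nat_mono)
  qed
  ultimately show ?thesis by blast
qed

lemma P_point_continuous_selection_avoiding_infinity: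
  assumes "P_point U" and lsc: "lsc_closed_valued (Y_space U) S_omega \<phi>"
    and "None \<in> \<phi> None" and avoid: "{n. None \<notin> \<phi> (Some n)} \<in> U"
  shows "\<exists>s. continuous_map (Y_space U) S_omega s \<and> (\<forall>y\<in>topspace (Y_space U). s y \<in> \<phi> y)"
proof -
  have F: "is_filter_on_nat U" using assms(1) by (rule P_point_imp_filter)
  have closed: "closedin S_omega (\<phi> y)" and nonempty: "\<phi> y \<noteq> {}" for y
    using lsc unfolding lsc_closed_valued_def topspace_Y_space[OF F] by auto
  define D where "D = {n. None \<notin> \<phi> (Some n)}"
  define T where "T n = {(m, k). n \<in> D \<and> Some (m, k) \<in> \<phi> (Some n)}" for n
  have finite_spine: "finite {k. Some (m, k) \<in> \<phi> (Some n)}" if "n \<in> D" for n m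
    using closedin_S_omega_finite_spine[OF closed] that unfolding D_def by blast
  have "\<exists>m. \<forall>K. {n. \<exists>k>K. (m, k) \<in> T n} \<in> U"
  proof (rule P_point_escapes_along_spine[OF assms(1)])
    show "finite {k. (m, k) \<in> T n}" for n m
      using finite_spine by (cases "n \<in> D") (auto simp: T_def)
    fix f
    have "{n. \<phi> (Some n) \<inter> fan_nbhd f \<noteq> {}} \<in> U"
      using lsc_closed_valued_Y_space_at_infinity[OF F lsc openin_S_omega_fan_nbhd]
        \<open>None \<in> \<phi> None\<close> by (auto simp: fan_nbhd_def)
    moreover have "{n. \<phi> (Some n) \<inter> fan_nbhd f \<noteq> {}} \<inter> D \<subseteq> {n. \<exists>m k. (m, k) \<in> T n \<and> f m < k}"
      by (auto simp: fan_nbhd_def T_def D_def)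
    ultimately show "{n. \<exists>m k. (m, k) \<in> T n \<and> f m < k} \<in> U"
      using F avoid unfolding D_def by (meson is_filter_on_nat_Int is_filter_on_nat_mono)
  qed
  then obtain m where m: "\<And>K. {n. \<exists>k>K. (m, k) \<in> T n} \<in> U" by blast
  have "{n. \<exists>k>K. Some (m, k) \<in> \<phi> (Some n)} \<in> U" for K
    by (rule is_filter_on_nat_mono[OF F m[of K]]) (auto simp: T_def)
  then show ?thesis
    using continuous_selection_along_spine[where m = m, OF F nonempty \<open>None \<in> \<phi> None\<close>
        avoid[folded D_def] finite_spine] by blast
qed

theorem mainTheorem2:
  fixes U :: "nat set set"
  assumes "P_point U"
  shows "\<forall>\<phi> :: nat option \<Rightarrow> (nat \<times> nat) option set.
           lsc_closed_valued (Y_space U) S_omega \<phi> \<longrightarrow>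
           (\<exists>s. continuous_map (Y_space U) S_omega s \<and>
                (\<forall>y\<in>topspace (Y_space U). s y \<in> \<phi> y))"
proof (intro allI impI)
  fix \<phi> :: "nat option \<Rightarrow> (nat \<times> nat) option set"
  assume lsc: "lsc_closed_valued (Y_space U) S_omega \<phi>"
  have F: "is_filter_on_nat U" using assms by (rule P_point_imp_filter)
  consider (persistent_point) p where "p \<in> \<phi> None" "{n. p \<in> \<phi> (Some n)} \<in> U"
    | (avoiding_infinity) "None \<in> \<phi> None" "{n. None \<notin> \<phi> (Some n)} \<in> U"
  proof (cases "\<exists>q. Some q \<in> \<phi> None")
    case True
    then obtain q where q: "Some q \<in> \<phi> None" by blast
    have "openin S_omega {Some q}" by (simp add: openin_S_omega)
    from lsc_closed_valued_Y_space_at_infinity[OF F lsc this] q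
    show thesis by (intro persistent_point[OF q]) auto
  next
    case False
    then have "None \<in> \<phi> None"
      using lsc unfolding lsc_closed_valued_def topspace_Y_space[OF F]
      by (metis ex_in_conv UNIV_I not_None_eq)
    moreover have "{n. None \<in> \<phi> (Some n)} \<in> U \<or> {n. None \<notin> \<phi> (Some n)} \<in> U"
      using assms unfolding P_point_def is_ultrafilter_on_nat_def by (metis Collect_neg_eq)
    ultimately show thesis using persistent_point avoiding_infinity by blast
  qed
  then show "\<exists>s. continuous_map (Y_space U) S_omega s \<and> (\<forall>y\<in>topspace (Y_space U). s y \<in> \<phi> y)"
    by cases (auto intro: continuous_selection_through_point[OF F lsc]
        P_point_continuous_selection_avoiding_infinity[OF assms lsc])
qed

end
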